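(* Let $k\geqslant 1$ and $\Delta\geqslant 3$ be integers. Then there are only finitely many (finite, simple, connected) graphs $G$ of maximum degree $\Delta$ such that $g_k(G)<k-2$.
   Context: For integers $k\geqslant 1$ and $\Delta\geqslant 3$, let $f(k,\Delta)=\Delta\sum_{i=0}^{k-1}(\Delta-1)^i$ (the number of non-root nodes of a $\Delta$-ary tree of height $k$). For a graph $G$, its $k$-th power $G^k$ is the graph on $V(G)$ in which two distinct vertices are adjacent iff their distance in $G$ is at most $k$. $\chi$ denotes the chromatic number and $\Delta(G)$ the maximum degree of $G$. The $k$-gap of $G$ is $g_k(G)=f(k,\Delta(G))+1-\chi(G^k)$. *)

theory Defs
  imports Main
begin

definition simple_graph :: "'a set \<Rightarrow> ('a \<Rightarrow> 'a \<Rightarrow> bool) \<Rightarrow> bool" where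
  "simple_graph V E \<longleftrightarrow> finite V \<and> (\<forall>u v. E u v \<longrightarrow> u \<in> V \<and> v \<in> V)
     \<and> (\<forall>u v. E u v \<longrightarrow> E v u) \<and> (\<forall>v. \<not> E v v)"

text \<open>A walk from u to v given as the list of its vertices; its length is length xs - 1.\<close>
definition walk_betw :: "'a set \<Rightarrow> ('a \<Rightarrow> 'a \<Rightarrow> bool) \<Rightarrow> 'a \<Rightarrow> 'a list \<Rightarrow> 'a \<Rightarrow> bool" where
  "walk_betw V E u xs v \<longleftrightarrow> xs \<noteq> [] \<and> hd xs = u \<and> last xs = v \<and> set xs \<subseteq> V
     \<and> (\<forall>i. Suc i < length xs \<longrightarrow> E (xs ! i) (xs ! Suc i))"

definition connected_graph :: "'a set \<Rightarrow> ('a \<Rightarrow> 'a \<Rightarrow> bool) \<Rightarrow> bool" where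
  "connected_graph V E \<longleftrightarrow> V \<noteq> {} \<and> (\<forall>u\<in>V. \<forall>v\<in>V. \<exists>xs. walk_betw V E u xs v)"

definition degree :: "'a set \<Rightarrow> ('a \<Rightarrow> 'a \<Rightarrow> bool) \<Rightarrow> 'a \<Rightarrow> nat" where
  "degree V E v = card {u \<in> V. E v u}"

definition max_degree :: "'a set \<Rightarrow> ('a \<Rightarrow> 'a \<Rightarrow> bool) \<Rightarrow> nat" where
  "max_degree V E = Max (degree V E ` V)"

definition dist_le :: "'a set \<Rightarrow> ('a \<Rightarrow> 'a \<Rightarrow> bool) \<Rightarrow> nat \<Rightarrow> 'a \<Rightarrow> 'a \<Rightarrow> bool" where
  "dist_le V E k u v \<longleftrightarrow> (\<exists>xs. walk_betw V E u xs v \<and> length xs - 1 \<le> k)"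

definition graph_power :: "'a set \<Rightarrow> ('a \<Rightarrow> 'a \<Rightarrow> bool) \<Rightarrow> nat \<Rightarrow> 'a \<Rightarrow> 'a \<Rightarrow> bool" where
  "graph_power V E k u v \<longleftrightarrow> u \<noteq> v \<and> dist_le V E k u v"

definition colourable :: "'a set \<Rightarrow> ('a \<Rightarrow> 'a \<Rightarrow> bool) \<Rightarrow> nat \<Rightarrow> bool" where
  "colourable V E c \<longleftrightarrow> (\<exists>col :: 'a \<Rightarrow> nat. (\<forall>v\<in>V. col v < c)
     \<and> (\<forall>u\<in>V. \<forall>v\<in>V. E u v \<longrightarrow> col u \<noteq> col v))"

definition chromatic_number :: "'a set \<Rightarrow> ('a \<Rightarrow> 'a \<Rightarrow> bool) \<Rightarrow> nat" where
  "chromatic_number V E = (LEAST c. colourable V E c)"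

definition f_tree :: "nat \<Rightarrow> nat \<Rightarrow> nat" where
  "f_tree k D = D * (\<Sum>i<k. (D - 1) ^ i)"

definition k_gap :: "nat \<Rightarrow> 'a set \<Rightarrow> ('a \<Rightarrow> 'a \<Rightarrow> bool) \<Rightarrow> int" where
  "k_gap k V E = int (f_tree k (max_degree V E)) + 1 - int (chromatic_number V (graph_power V E k))"

end

theory Submission
  imports Defs
begin

text \<open>A graph with more than 1 + f(4k, D) vertices contains a geodesic path P of length 4k.
  Colour P by position modulo k + 1, and then the other vertices greedily in decreasing order
  of their distance to the middle part (the core) of P. We show that f(k, D) + 3 - k colours
  suffice, i.e. the k-gap is at least k - 2. The count rests on a Moore bound refined by
  deficiencies: the non-backtracking walks of length 1..k from v, together with the defects
  D - deg of the end vertices of the shorter ones, number at most f(k, D). A vertex adjacent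
  to the core sees 2k - 1 vertices of P carrying only k + 1 colours. Any other vertex v has
  k - 2 non-backtracking walks, each ending at a vertex that is coloured after v or has degree
  below D; each of them lowers the number of colours v has to avoid by one.\<close>

lemma transversal_exists:
  assumes "\<And>s. s \<in> S \<Longrightarrow> X s \<noteq> {}"
    and "\<And>s t. s \<in> S \<Longrightarrow> t \<in> S \<Longrightarrow> s \<noteq> t \<Longrightarrow> X s \<inter> X t = {}"
  obtains F where "F \<subseteq> (\<Union>s\<in>S. X s)" "card F = card S"
proof -
  define pick where "pick s = (SOME x. x \<in> X s)" for s
  have pick: "pick s \<in> X s" if s: "s \<in> S" for s
  proof -
    obtain x where "x \<in> X s" using assms(1)[OF s] by blast
    then show ?thesis unfolding pick_def by (rule someI)
  qed
  have "inj_on pick S"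
  proof (rule inj_onI)
    fix s t assume st: "s \<in> S" "t \<in> S" "pick s = pick t"
    show "s = t"
    proof (rule ccontr)
      assume "s \<noteq> t"
      then have "X s \<inter> X t = {}" by (rule assms(2)[OF st(1,2)])
      moreover have "pick s \<in> X s" "pick s \<in> X t" using pick[OF st(1)] pick[OF st(2)] st(3) by simp_all
      ultimately show False by blast
    qed
  qed
  then have "card (pick ` S) = card S" by (rule card_image)
  moreover have "pick ` S \<subseteq> (\<Union>s\<in>S. X s)" using pick by auto
  ultimately show ?thesis by (rule that[rotated])
qed

lemma mod_Suc_neq_if_close:
  fixes a b k :: nat
  assumes "a \<noteq> b" "a - b \<le> k" "b - a \<le> k"
  shows "a mod Suc k \<noteq> b mod Suc k"
proof
  have far: "Suc k \<le> y - x" if "x < y" "x mod Suc k = y mod Suc k" for x y :: nat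
  proof -
    have "Suc k dvd y - x" using that mod_eq_dvd_iff_nat[of x y "Suc k"] by (simp add: eq_commute)
    then show ?thesis using that(1) by (simp add: dvd_imp_le)
  qed
  assume eq: "a mod Suc k = b mod Suc k"
  consider "a < b" | "b < a" using assms(1) by linarith
  then show False
  proof cases
    case 1
    then show False using far[OF 1 eq] assms(3) by simp
  next
    case 2
    then show False using far[OF 2 eq[symmetric]] assms(2) by simp
  qed
qed

section \<open>Non-backtracking walks\<close>

definition non_backtracking :: "'a list \<Rightarrow> bool" where
  "non_backtracking xs \<longleftrightarrow> (\<forall>j. Suc (Suc j) < length xs \<longrightarrow> xs ! j \<noteq> xs ! Suc (Suc j))"

definition nb_walks :: "'a set \<Rightarrow> ('a \<Rightarrow> 'a \<Rightarrow> bool) \<Rightarrow> 'a \<Rightarrow> nat \<Rightarrow> 'a list set" where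
  "nb_walks V E v n =
     {xs. length xs = Suc n \<and> hd xs = v \<and> set xs \<subseteq> V \<and> successively E xs \<and> non_backtracking xs}"

lemma walk_betw_iff: "walk_betw V E u xs v \<longleftrightarrow>
    xs \<noteq> [] \<and> hd xs = u \<and> last xs = v \<and> set xs \<subseteq> V \<and> successively E xs"
  by (simp add: walk_betw_def successively_conv_nth)

lemma successively_take: "successively P xs \<Longrightarrow> successively P (take n xs)"
  by (simp add: successively_conv_nth)

lemma non_backtracking_take: "non_backtracking xs \<Longrightarrow> non_backtracking (take n xs)"
  by (simp add: non_backtracking_def)

lemma non_backtracking_snocI:
  assumes "non_backtracking xs" and "length xs \<ge> 2 \<Longrightarrow> xs ! (length xs - 2) \<noteq> y"
  shows "non_backtracking (xs @ [y])"
  unfolding non_backtracking_def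
proof (intro allI impI)
  fix j assume j: "Suc (Suc j) < length (xs @ [y])"
  show "(xs @ [y]) ! j \<noteq> (xs @ [y]) ! Suc (Suc j)"
  proof (cases "Suc (Suc j) < length xs")
    case True
    then show ?thesis using assms(1) by (simp add: non_backtracking_def nth_append)
  next
    case False
    then have "j = length xs - 2" "Suc (Suc j) = length xs" using j by auto
    then have "(xs @ [y]) ! j = xs ! (length xs - 2)" and "(xs @ [y]) ! Suc (Suc j) = y"
      by (simp_all add: nth_append)
    then show ?thesis using assms(2) \<open>Suc (Suc j) = length xs\<close> by auto
  qed
qed

lemma nb_walks_length: "xs \<in> nb_walks V E v n \<Longrightarrow> length xs = Suc n"
  by (simp add: nb_walks_def)

lemma nb_walks_last:
  assumes "xs \<in> nb_walks V E v n" shows "last xs = xs ! n"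
proof -
  have "length xs = Suc n" using assms by (simp add: nb_walks_def)
  then show ?thesis by (metis diff_Suc_1 last_conv_nth list.size(3) nat.distinct(1))
qed

lemma nb_walks_nth_0: "xs \<in> nb_walks V E v n \<Longrightarrow> xs ! 0 = v"
  by (cases xs) (auto simp: nb_walks_def)

lemma nb_walks_nth_in_V: "xs \<in> nb_walks V E v n \<Longrightarrow> j \<le> n \<Longrightarrow> xs ! j \<in> V"
  by (auto simp: nb_walks_def intro: nth_mem)

lemma nb_walks_take:
  assumes xs: "xs \<in> nb_walks V E v n" and "m \<le> n"
  shows "take (Suc m) xs \<in> nb_walks V E v m" and "last (take (Suc m) xs) = xs ! m"
proof -
  have "length xs = Suc n" using xs by (simp add: nb_walks_def)
  then have len: "length (take (Suc m) xs) = Suc m" using \<open>m \<le> n\<close> by simp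
  then show "take (Suc m) xs \<in> nb_walks V E v m"
    using xs by (auto simp: nb_walks_def non_backtracking_take successively_take dest: in_set_takeD)
  show "last (take (Suc m) xs) = xs ! m"
    using len by (metis Zero_not_Suc diff_Suc_1 last_conv_nth lessI list.size(3) nth_take)
qed

section \<open>Distances in finite simple graphs\<close>

locale finite_graph =
  fixes V :: "'a set" and E :: "'a \<Rightarrow> 'a \<Rightarrow> bool"
  assumes simple: "simple_graph V E"
begin

lemma finite_V: "finite V"
  using simple by (simp add: simple_graph_def)

lemma edge_in_V: "E u v \<Longrightarrow> u \<in> V \<and> v \<in> V"
  using simple by (simp add: simple_graph_def)

lemma edge_sym: "E u v \<Longrightarrow> E v u"
  using simple by (simp add: simple_graph_def)

lemma no_loop: "\<not> E v v"
  using simple by (simp add: simple_graph_def)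

definition neighbours :: "'a \<Rightarrow> 'a set" where
  "neighbours x = {y \<in> V. E x y}"

lemma finite_neighbours: "finite (neighbours x)"
  using finite_V by (simp add: neighbours_def)

lemma degree_eq_card_neighbours: "degree V E x = card (neighbours x)"
  by (simp add: degree_def neighbours_def)

lemma dist_le_refl: "u \<in> V \<Longrightarrow> dist_le V E n u u"
  unfolding dist_le_def walk_betw_iff by (intro exI[of _ "[u]"]) auto

lemma dist_le_mono: "dist_le V E n u v \<Longrightarrow> n \<le> m \<Longrightarrow> dist_le V E m u v"
  unfolding dist_le_def by auto

lemma dist_le_in_V: "dist_le V E n u v \<Longrightarrow> u \<in> V \<and> v \<in> V"
  unfolding dist_le_def walk_betw_iff by (metis hd_in_set last_in_set subsetD)

lemma dist_le_0_iff: "dist_le V E 0 u v \<longleftrightarrow> u = v \<and> u \<in> V"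
proof
  assume "dist_le V E 0 u v"
  then obtain xs where xs: "walk_betw V E u xs v" "length xs \<le> 1"
    unfolding dist_le_def by auto
  then obtain a where "xs = [a]"
    by (cases xs) (auto simp: walk_betw_def)
  then show "u = v \<and> u \<in> V"
    using xs(1) by (auto simp: walk_betw_def)
qed (auto intro: dist_le_refl)

lemma dist_le_Suc_iff:
  "dist_le V E (Suc n) u v \<longleftrightarrow> u = v \<and> u \<in> V \<or> (\<exists>w. E u w \<and> dist_le V E n w v)"
proof
  assume "dist_le V E (Suc n) u v"
  then obtain xs where xs: "walk_betw V E u xs v" "length xs - 1 \<le> Suc n"
    unfolding dist_le_def by auto
  show "u = v \<and> u \<in> V \<or> (\<exists>w. E u w \<and> dist_le V E n w v)"
  proof (cases xs)
    case Nil
    then show ?thesis using xs by (simp add: walk_betw_def)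
  next
    case (Cons a ys)
    show ?thesis
    proof (cases ys)
      case Nil
      then show ?thesis using xs Cons by (auto simp: walk_betw_def)
    next
      case (Cons b zs)
      then have "E u b" and "walk_betw V E b ys v"
        using xs(1) \<open>xs = a # ys\<close> by (auto simp: walk_betw_iff)
      moreover have "length ys - 1 \<le> n"
        using xs(2) \<open>xs = a # ys\<close> by simp
      ultimately show ?thesis unfolding dist_le_def by blast
    qed
  qed
next
  assume "u = v \<and> u \<in> V \<or> (\<exists>w. E u w \<and> dist_le V E n w v)"
  then show "dist_le V E (Suc n) u v"
  proof
    assume "\<exists>w. E u w \<and> dist_le V E n w v"
    then obtain w xs where "E u w" "walk_betw V E w xs v" "length xs - 1 \<le> n"
      unfolding dist_le_def by auto
    then have "walk_betw V E u (u # xs) v" "length (u # xs) - 1 \<le> Suc n"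
      using edge_in_V by (auto simp: walk_betw_iff successively_Cons)
    then show ?thesis unfolding dist_le_def by blast
  qed (auto intro: dist_le_refl)
qed

lemma dist_le_edge: "E u v \<Longrightarrow> dist_le V E 1 u v"
  using dist_le_Suc_iff[of 0] dist_le_refl edge_in_V by auto

lemma dist_le_trans: "dist_le V E a u v \<Longrightarrow> dist_le V E b v w \<Longrightarrow> dist_le V E (a + b) u w"
proof (induction a arbitrary: u)
  case 0
  then show ?case by (simp add: dist_le_0_iff)
next
  case (Suc a)
  from Suc.prems(1) consider "u = v" | x where "E u x" "dist_le V E a x v"
    by (auto simp: dist_le_Suc_iff)
  then show ?case
  proof cases
    case 1
    then show ?thesis using Suc.prems(2) by (auto intro: dist_le_mono)
  next
    case 2
    then show ?thesis using Suc.IH Suc.prems(2) by (auto simp: dist_le_Suc_iff)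
  qed
qed

lemma dist_le_sym: "dist_le V E n u v \<Longrightarrow> dist_le V E n v u"
proof (induction n arbitrary: u)
  case 0
  then show ?case by (auto simp: dist_le_0_iff)
next
  case (Suc n)
  then consider "u = v" | w where "E u w" "dist_le V E n w v"
    by (auto simp: dist_le_Suc_iff)
  then show ?case
  proof cases
    case 1
    then show ?thesis using Suc.prems dist_le_in_V by (auto intro: dist_le_refl)
  next
    case 2
    then have "dist_le V E (n + 1) v u"
      using Suc.IH dist_le_trans dist_le_edge edge_sym by blast
    then show ?thesis by simp
  qed
qed

lemma dist_le_along_walk:
  assumes walk: "successively E xs" "set xs \<subseteq> V" and "i + m < length xs"
  shows "dist_le V E m (xs ! i) (xs ! (i + m))"
  using assms(3)
proof (induction m arbitrary: i)
  case 0
  then have "xs ! i \<in> V" using walk(2) by auto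
  then show ?case by (simp add: dist_le_refl)
next
  case (Suc m)
  have "E (xs ! i) (xs ! Suc i)"
    using successively_nth[OF walk(1)] Suc.prems by simp
  moreover have "dist_le V E m (xs ! Suc i) (xs ! (Suc i + m))"
    using Suc.IH[of "Suc i"] Suc.prems by simp
  ultimately show ?case
    unfolding dist_le_Suc_iff by (metis add_Suc_right add_Suc)
qed

lemma nb_walks_snoc:
  assumes xs: "xs \<in> nb_walks V E v n" and y: "E (last xs) y" "n \<ge> 1 \<Longrightarrow> y \<noteq> xs ! (n - 1)"
  shows "xs @ [y] \<in> nb_walks V E v (Suc n)"
proof -
  have len: "length xs = Suc n" using xs by (simp add: nb_walks_def)
  then have "xs \<noteq> []" by auto
  moreover have "non_backtracking (xs @ [y])"
    using xs y(2) len by (intro non_backtracking_snocI) (auto simp: nb_walks_def)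
  ultimately show ?thesis
    using xs y(1) edge_in_V[OF y(1)] by (auto simp: nb_walks_def successively_append_iff)
qed

definition dist_to :: "'a set \<Rightarrow> 'a \<Rightarrow> nat" where
  "dist_to S x = (LEAST n. \<exists>z\<in>S. dist_le V E n x z)"

lemma dist_to_le: "z \<in> S \<Longrightarrow> dist_le V E n x z \<Longrightarrow> dist_to S x \<le> n"
  unfolding dist_to_def by (rule Least_le) blast

end

locale connected_finite_graph = finite_graph +
  assumes connected: "connected_graph V E"
begin

lemma dist_le_exists: "u \<in> V \<Longrightarrow> v \<in> V \<Longrightarrow> \<exists>n. dist_le V E n u v"
  using connected unfolding connected_graph_def dist_le_def by blast

context
  fixes S assumes S: "S \<subseteq> V" "S \<noteq> {}"
begin

lemma dist_to_attained: "x \<in> V \<Longrightarrow> \<exists>z\<in>S. dist_le V E (dist_to S x) x z"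
proof -
  assume "x \<in> V"
  obtain z where "z \<in> S" using S by blast
  moreover have "z \<in> V" using S(1) \<open>z \<in> S\<close> by blast
  then obtain n where "dist_le V E n x z" using dist_le_exists[OF \<open>x \<in> V\<close>] by blast
  ultimately have "\<exists>n. \<exists>z\<in>S. dist_le V E n x z" by blast
  then show ?thesis unfolding dist_to_def by (rule LeastI_ex)
qed

lemma dist_to_eq_0_iff:
  assumes "x \<in> V" shows "dist_to S x = 0 \<longleftrightarrow> x \<in> S"
proof
  assume "dist_to S x = 0"
  then obtain z where "z \<in> S" "dist_le V E 0 x z"
    using dist_to_attained[OF assms] by auto
  then show "x \<in> S" by (simp add: dist_le_0_iff)
next
  assume "x \<in> S"
  then show "dist_to S x = 0"
    using dist_to_le[OF \<open>x \<in> S\<close> dist_le_refl[OF assms, of 0]] by simp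
qed

lemma dist_to_le_add: "dist_le V E n x y \<Longrightarrow> dist_to S x \<le> n + dist_to S y"
proof -
  assume xy: "dist_le V E n x y"
  then have "y \<in> V" using dist_le_in_V by blast
  then obtain z where "z \<in> S" "dist_le V E (dist_to S y) y z"
    using dist_to_attained by blast
  then show ?thesis using dist_to_le dist_le_trans[OF xy] by blast
qed

lemma dist_to_Suc_step:
  assumes "x \<in> V" "dist_to S x = Suc n"
  obtains y where "E x y" "dist_to S y = n"
proof -
  obtain z where z: "z \<in> S" "dist_le V E (Suc n) x z"
    using dist_to_attained[OF assms(1)] assms(2) by auto
  have "x \<notin> S" using dist_to_eq_0_iff[OF assms(1)] assms(2) by simp
  then obtain y where y: "E x y" "dist_le V E n y z"
    using z by (auto simp: dist_le_Suc_iff)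
  have "dist_to S y \<le> n" using dist_to_le z(1) y(2) by blast
  moreover have "Suc n \<le> 1 + dist_to S y"
    using dist_to_le_add[OF dist_le_edge[OF y(1)]] assms(2) by simp
  ultimately show ?thesis using that y(1) by simp
qed

lemma descending_walk:
  "x \<in> V \<Longrightarrow> dist_to S x = n \<Longrightarrow> \<exists>xs. length xs = Suc n \<and> hd xs = x \<and> set xs \<subseteq> V
     \<and> successively E xs \<and> (\<forall>s\<le>n. dist_to S (xs ! s) = n - s)"
proof (induction n arbitrary: x)
  case 0
  then show ?case by (intro exI[of _ "[x]"]) auto
next
  case (Suc n)
  obtain y where y: "E x y" "dist_to S y = n"
    by (rule dist_to_Suc_step[OF Suc.prems])
  have "y \<in> V" using edge_in_V[OF y(1)] by simp
  from Suc.IH[OF this y(2)] obtain ys where ys: "length ys = Suc n" "hd ys = y" "set ys \<subseteq> V"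
    "successively E ys" "\<forall>s\<le>n. dist_to S (ys ! s) = n - s"
    by (elim exE conjE)
  have "\<forall>s\<le>Suc n. dist_to S ((x # ys) ! s) = Suc n - s"
  proof (intro allI impI)
    fix s assume "s \<le> Suc n"
    then show "dist_to S ((x # ys) ! s) = Suc n - s"
      using ys(5) Suc.prems(2) by (cases s) simp_all
  qed
  moreover have "successively E (x # ys)"
    using ys(1,2,4) y(1) by (cases ys) simp_all
  ultimately show ?case
    using ys(1,3) Suc.prems(1) by (intro exI[of _ "x # ys"]) simp
qed

text \<open>Along a walk on which the distance to S drops by one in every step no vertex can repeat,
  so such a walk is non-backtracking.\<close>

lemma descending_nb_walk:
  assumes "x \<in> V"
  obtains xs where "xs \<in> nb_walks V E x (dist_to S x)"
    and "\<forall>s\<le>dist_to S x. dist_to S (xs ! s) = dist_to S x - s"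
proof -
  let ?n = "dist_to S x"
  obtain xs where xs: "length xs = Suc ?n" "hd xs = x" "set xs \<subseteq> V" "successively E xs"
    and desc: "\<forall>s\<le>?n. dist_to S (xs ! s) = ?n - s"
    using descending_walk[OF assms refl] by blast
  have "non_backtracking xs"
    unfolding non_backtracking_def
  proof (intro allI impI notI)
    fix j assume "Suc (Suc j) < length xs" "xs ! j = xs ! Suc (Suc j)"
    then show False using desc[rule_format, of j] desc[rule_format, of "Suc (Suc j)"] xs(1) by simp
  qed
  with xs have "xs \<in> nb_walks V E x ?n" by (simp add: nb_walks_def)
  then show ?thesis using desc by (rule that)
qed

end

end

section \<open>Moore bound with deficiency\<close>

lemma f_tree_eq_sum: "f_tree k D = (\<Sum>j=1..k. D * (D - 1) ^ (j - 1))"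
proof -
  have "(\<Sum>j=1..k. D * (D - 1) ^ (j - 1)) = (\<Sum>i<k. D * (D - 1) ^ i)"
    by (rule sum.reindex_bij_witness[of _ Suc "\<lambda>j. j - 1"]) auto
  then show ?thesis by (simp add: f_tree_def sum_distrib_left)
qed

lemma mult_le_f_tree: "D \<ge> 2 \<Longrightarrow> k * D \<le> f_tree k D"
proof -
  assume "D \<ge> 2"
  then have "(\<Sum>i<k. 1) \<le> (\<Sum>i<k. (D - 1) ^ i)"
    by (intro sum_mono) simp
  then show ?thesis by (simp add: f_tree_def mult.commute)
qed

locale bounded_degree_graph = finite_graph +
  fixes D :: nat
  assumes degree_le: "v \<in> V \<Longrightarrow> degree V E v \<le> D"
begin

lemma finite_nb_walks: "finite (nb_walks V E v n)"
proof (rule finite_subset)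
  show "nb_walks V E v n \<subseteq> {xs. set xs \<subseteq> V \<and> length xs = Suc n}"
    by (auto simp: nb_walks_def)
  show "finite {xs. set xs \<subseteq> V \<and> length xs = Suc n}"
    using finite_lists_length_eq[OF finite_V] .
qed

lemma penultimate_in_neighbours:
  assumes "xs \<in> nb_walks V E v n" "n \<ge> 1"
  shows "xs ! (n - 1) \<in> neighbours (last xs)"
proof -
  have "E (xs ! (n - 1)) (xs ! Suc (n - 1))"
    using successively_nth[of E xs "n - 1"] assms by (auto simp: nb_walks_def)
  then show ?thesis
    using assms edge_sym edge_in_V by (auto simp: neighbours_def nb_walks_last)
qed

lemma nb_walks_Suc_subset:
  assumes "n \<ge> 1"
  shows "nb_walks V E v (Suc n) \<subseteq>
    (\<Union>xs\<in>nb_walks V E v n. (\<lambda>y. xs @ [y]) ` (neighbours (last xs) - {xs ! (n - 1)}))"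
proof
  fix xs assume xs: "xs \<in> nb_walks V E v (Suc n)"
  let ?ys = "take (Suc n) xs"
  have len: "length xs = Suc (Suc n)" using xs by (simp add: nb_walks_def)
  have ys: "?ys \<in> nb_walks V E v n" "last ?ys = xs ! n"
    using nb_walks_take[OF xs, of n] by simp_all
  have split: "xs = ?ys @ [xs ! Suc n]"
    using len by (metis lessI take_Suc_conv_app_nth take_all_iff order.refl)
  have "E (xs ! n) (xs ! Suc n)"
    using successively_nth[of E xs n] xs len by (auto simp: nb_walks_def)
  moreover have "xs ! Suc n \<in> V"
    using nb_walks_nth_in_V[OF xs, of "Suc n"] by simp
  moreover have "xs ! Suc n \<noteq> ?ys ! (n - 1)"
  proof -
    have "non_backtracking xs" using xs by (simp add: nb_walks_def)
    moreover obtain j where j: "n = Suc j" using assms by (cases n) auto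
    ultimately have "xs ! j \<noteq> xs ! Suc (Suc j)"
      using len unfolding non_backtracking_def by simp
    then show ?thesis using j by simp
  qed
  ultimately have "xs ! Suc n \<in> neighbours (last ?ys) - {?ys ! (n - 1)}"
    using ys(2) by (simp add: neighbours_def)
  then show "xs \<in> (\<Union>xs\<in>nb_walks V E v n. (\<lambda>y. xs @ [y]) ` (neighbours (last xs) - {xs ! (n - 1)}))"
    using ys(1) split by blast
qed

definition deficiency :: "'a \<Rightarrow> nat \<Rightarrow> nat" where
  "deficiency v n = (\<Sum>xs\<in>nb_walks V E v n. D - degree V E (last xs))"

lemma card_nb_walks_Suc_le:
  assumes "n \<ge> 1"
  shows "card (nb_walks V E v (Suc n)) + deficiency v n \<le> (D - 1) * card (nb_walks V E v n)"
proof -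
  let ?N = "nb_walks V E v n"
  have degree_last: "1 \<le> degree V E (last xs) \<and> degree V E (last xs) \<le> D" if "xs \<in> ?N" for xs
  proof -
    have "neighbours (last xs) \<noteq> {}"
      using penultimate_in_neighbours[OF that assms] by blast
    then have "1 \<le> degree V E (last xs)"
      using finite_neighbours by (simp add: degree_eq_card_neighbours Suc_le_eq card_gt_0_iff)
    moreover have "last xs \<in> V"
      using nb_walks_nth_in_V[OF that, of n] nb_walks_last[OF that] by simp
    ultimately show ?thesis using degree_le by blast
  qed
  have "card (nb_walks V E v (Suc n))
      \<le> card (\<Union>xs\<in>?N. (\<lambda>y. xs @ [y]) ` (neighbours (last xs) - {xs ! (n - 1)}))"
    using nb_walks_Suc_subset[OF assms] finite_nb_walks finite_neighbours by (intro card_mono) auto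
  also have "\<dots> \<le> (\<Sum>xs\<in>?N. card ((\<lambda>y. xs @ [y]) ` (neighbours (last xs) - {xs ! (n - 1)})))"
    by (rule card_UN_le[OF finite_nb_walks])
  also have "\<dots> \<le> (\<Sum>xs\<in>?N. card (neighbours (last xs) - {xs ! (n - 1)}))"
    using finite_neighbours by (intro sum_mono card_image_le) simp
  also have "\<dots> = (\<Sum>xs\<in>?N. degree V E (last xs) - 1)"
    using penultimate_in_neighbours[OF _ assms] finite_neighbours
    by (intro sum.cong) (simp_all add: degree_eq_card_neighbours)
  finally have "card (nb_walks V E v (Suc n)) + deficiency v n
      \<le> (\<Sum>xs\<in>?N. (degree V E (last xs) - 1) + (D - degree V E (last xs)))"
    by (simp add: deficiency_def sum.distrib)
  also have "\<dots> = (\<Sum>xs\<in>?N. D - 1)"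
    using degree_last by (intro sum.cong) auto
  finally show ?thesis by (simp add: mult.commute)
qed

lemma card_nb_walks_le:
  assumes "v \<in> V" "D \<ge> 2" "n \<ge> 1"
  shows "card (nb_walks V E v n) + (\<Sum>j=1..<n. deficiency v j) \<le> D * (D - 1) ^ (n - 1)"
  using assms(3)
proof (induction n rule: dec_induct)
  case base
  have "nb_walks V E v 1 \<subseteq> (\<lambda>y. [v, y]) ` neighbours v"
    by (auto simp: nb_walks_def neighbours_def length_Suc_conv)
  then have "card (nb_walks V E v 1) \<le> card (neighbours v)"
    using finite_neighbours by (meson card_image_le card_mono finite_imageI order_trans)
  then show ?case using degree_le[OF assms(1)] by (simp add: degree_eq_card_neighbours)
next
  case (step n)
  have "card (nb_walks V E v (Suc n)) + (\<Sum>j=1..<Suc n. deficiency v j)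
      = (card (nb_walks V E v (Suc n)) + deficiency v n) + (\<Sum>j=1..<n. deficiency v j)"
    using step.hyps by (simp add: sum.atLeastLessThan_Suc)
  also have "\<dots> \<le> (D - 1) * card (nb_walks V E v n) + (D - 1) * (\<Sum>j=1..<n. deficiency v j)"
  proof (rule add_mono)
    have "1 \<le> D - 1" using assms(2) by simp
    from mult_le_mono1[OF this] show "(\<Sum>j=1..<n. deficiency v j) \<le> (D - 1) * (\<Sum>j=1..<n. deficiency v j)"
      by simp
  qed (rule card_nb_walks_Suc_le[OF step.hyps(1)])
  also have "\<dots> = (D - 1) * (card (nb_walks V E v n) + (\<Sum>j=1..<n. deficiency v j))"
    by (simp add: add_mult_distrib2)
  also have "\<dots> \<le> (D - 1) * (D * (D - 1) ^ (n - 1))"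
    using step.IH by (rule mult_le_mono2)
  also have "\<dots> = D * (D - 1) ^ (Suc n - 1)"
    using step.hyps by (cases n) (auto simp: algebra_simps)
  finally show ?case .
qed

lemma card_deficient_nb_walks_le:
  "card {xs \<in> nb_walks V E v j. degree V E (last xs) < D} \<le> deficiency v j"
proof -
  let ?A = "{xs \<in> nb_walks V E v j. degree V E (last xs) < D}"
  have "card ?A = (\<Sum>xs\<in>?A. 1)" by simp
  also have "\<dots> \<le> (\<Sum>xs\<in>?A. D - degree V E (last xs))"
    by (rule sum_mono) auto
  also have "\<dots> \<le> deficiency v j"
    unfolding deficiency_def by (rule sum_mono2[OF finite_nb_walks]) auto
  finally show ?thesis .
qed

lemma card_deficient_walks_le:
  assumes "F \<subseteq> (\<Union>j\<in>{1..<k}. nb_walks V E v j)" "\<forall>xs\<in>F. degree V E (last xs) < D"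
  shows "card F \<le> (\<Sum>j=1..<k. deficiency v j)"
proof -
  have "F \<subseteq> (\<Union>j\<in>{1..<k}. {xs \<in> nb_walks V E v j. degree V E (last xs) < D})"
    using assms by blast
  then have "card F \<le> card (\<Union>j\<in>{1..<k}. {xs \<in> nb_walks V E v j. degree V E (last xs) < D})"
    using finite_nb_walks by (intro card_mono) simp_all
  also have "\<dots> \<le> (\<Sum>j=1..<k. card {xs \<in> nb_walks V E v j. degree V E (last xs) < D})"
    by (rule card_UN_le) simp
  also have "\<dots> \<le> (\<Sum>j=1..<k. deficiency v j)"
    by (rule sum_mono) (rule card_deficient_nb_walks_le)
  finally show ?thesis .
qed

lemma moore_bound:
  assumes "v \<in> V" "D \<ge> 2" "k \<ge> 1"
  shows "(\<Sum>j=1..k. card (nb_walks V E v j)) + (\<Sum>j=1..<k. deficiency v j) \<le> f_tree k D"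
proof -
  have k: "{1..k} = insert k {1..<k}" using assms(3) by auto
  have "(\<Sum>j=1..<k. card (nb_walks V E v j)) \<le> (\<Sum>j=1..<k. D * (D - 1) ^ (j - 1))"
    using card_nb_walks_le[OF assms(1,2)] by (intro sum_mono) (meson atLeastLessThan_iff le_add1 le_trans)
  then show ?thesis
    using card_nb_walks_le[OF assms] unfolding f_tree_eq_sum k by simp
qed

end

locale bounded_connected_graph = connected_finite_graph + bounded_degree_graph
begin

lemma nb_walk_to_vertex:
  assumes "v \<in> V" "u \<in> V" "u \<noteq> v" "dist_le V E k v u"
  obtains j xs where "j \<in> {1..k}" "xs \<in> nb_walks V E v j" "last xs = u"
proof -
  let ?j = "dist_to {u} v"
  obtain xs where xs: "xs \<in> nb_walks V E v ?j" "\<forall>s\<le>?j. dist_to {u} (xs ! s) = ?j - s"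
    using descending_nb_walk[of "{u}" v] assms(1,2) by blast
  have "?j \<le> k" using dist_to_le[of u "{u}"] assms(4) by blast
  moreover have "?j \<noteq> 0" using dist_to_eq_0_iff[of "{u}" v] assms by simp
  moreover have "last xs = u"
  proof -
    have "dist_to {u} (xs ! ?j) = 0" using xs(2) by simp
    then show ?thesis
      using nb_walks_last[OF xs(1)] nb_walks_nth_in_V[OF xs(1), of ?j] dist_to_eq_0_iff[of "{u}"] assms(2)
      by simp
  qed
  ultimately show ?thesis using that[of ?j xs] xs(1) by simp
qed

text \<open>Every vertex of the punctured k-ball outside S is the end of a non-backtracking walk of
  length at most k that is not in F.\<close>

lemma card_ball_plus_walks_le:
  assumes v: "v \<in> V" and "D \<ge> 2" "k \<ge> 1"
    and F: "F \<subseteq> (\<Union>j\<in>{1..k}. nb_walks V E v j)"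
      "\<forall>xs\<in>F. last xs \<in> S \<or> length xs \<le> k \<and> degree V E (last xs) < D"
  shows "card {u \<in> V. u \<noteq> v \<and> dist_le V E k v u \<and> u \<notin> S} + card F \<le> f_tree k D"
proof -
  let ?W = "\<Union>j\<in>{1..k}. nb_walks V E v j"
  let ?B = "{u \<in> V. u \<noteq> v \<and> dist_le V E k v u \<and> u \<notin> S}"
  define F1 where "F1 = {xs \<in> F. last xs \<in> S}"
  define F2 where "F2 = F - F1"
  have fin_W: "finite ?W" using finite_nb_walks by blast
  then have fin_F: "finite F" using F(1) finite_subset by blast
  have "?B \<subseteq> last ` (?W - F1)"
  proof
    fix u assume u: "u \<in> ?B"
    then obtain j xs where "j \<in> {1..k}" "xs \<in> nb_walks V E v j" "last xs = u"
      using nb_walk_to_vertex[OF v] by blast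
    moreover from this have "xs \<in> ?W - F1" using u by (auto simp: F1_def)
    ultimately show "u \<in> last ` (?W - F1)" by blast
  qed
  then have "card ?B \<le> card (?W - F1)"
    using fin_W card_image_le[of "?W - F1" last] by (meson card_mono finite_Diff finite_imageI le_trans)
  moreover have F1W: "F1 \<subseteq> ?W" using F(1) by (auto simp: F1_def)
  ultimately have B: "card ?B + card F1 \<le> card ?W"
    using card_Diff_subset[OF finite_subset[OF F1W fin_W] F1W] card_mono[OF fin_W F1W] by linarith
  have W: "card ?W \<le> (\<Sum>j=1..k. card (nb_walks V E v j))"
    by (rule card_UN_le) simp
  have "F2 \<subseteq> (\<Union>j\<in>{1..<k}. nb_walks V E v j)"
  proof
    fix xs assume "xs \<in> F2"
    then have xs: "xs \<in> F" "last xs \<notin> S" by (auto simp: F2_def F1_def)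
    then obtain j where j: "j \<in> {1..k}" "xs \<in> nb_walks V E v j" using F(1) by blast
    have "length xs \<le> k" using F(2) xs by auto
    then have "j < k" using nb_walks_length[OF j(2)] by simp
    then show "xs \<in> (\<Union>j\<in>{1..<k}. nb_walks V E v j)" using j by auto
  qed
  moreover have "\<forall>xs\<in>F2. degree V E (last xs) < D" using F(2) by (auto simp: F2_def F1_def)
  ultimately have "card F2 \<le> (\<Sum>j=1..<k. deficiency v j)"
    by (rule card_deficient_walks_le)
  moreover have "card F = card F1 + card F2"
    using fin_F by (simp add: F2_def F1_def card_Diff_subset card_mono)
  ultimately show ?thesis
    using B W moore_bound[OF v assms(2,3)] by linarith
qed

corollary card_punctured_ball_le:
  assumes "v \<in> V" "D \<ge> 2" "k \<ge> 1"
  shows "card {u \<in> V. u \<noteq> v \<and> dist_le V E k v u} \<le> f_tree k D"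
  using card_ball_plus_walks_le[OF assms, of "{}" "{}"] by simp

end

section \<open>Greedy colourings\<close>

definition proper_colouring :: "('a \<Rightarrow> 'a \<Rightarrow> bool) \<Rightarrow> 'a set \<Rightarrow> nat \<Rightarrow> ('a \<Rightarrow> nat) \<Rightarrow> bool" where
  "proper_colouring A X C col \<longleftrightarrow>
     (\<forall>x\<in>X. col x < C) \<and> (\<forall>x\<in>X. \<forall>y\<in>X. A x y \<longrightarrow> col x \<noteq> col y)"

lemma colourable_iff_proper_colouring: "colourable V A C \<longleftrightarrow> (\<exists>col. proper_colouring A V C col)"
  by (auto simp: colourable_def proper_colouring_def)

lemma proper_colouring_insert:
  assumes col: "proper_colouring A X C col" and "\<not> A v v" "finite X"
    and few: "card (col ` {u \<in> X. A v u \<or> A u v}) < C"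
  obtains c where "proper_colouring A (insert v X) C (col(v := c))"
proof -
  let ?used = "col ` {u \<in> X. A v u \<or> A u v}"
  have "\<not> {..<C} \<subseteq> ?used"
  proof
    assume "{..<C} \<subseteq> ?used"
    moreover have "finite ?used" using \<open>finite X\<close> by simp
    ultimately have "C \<le> card ?used" by (metis card_lessThan card_mono)
    with few show False by simp
  qed
  then obtain c where c: "c < C" "c \<notin> ?used" by auto
  have "proper_colouring A (insert v X) C (col(v := c))"
    using col c \<open>\<not> A v v\<close> unfolding proper_colouring_def by (auto simp: image_iff)
  then show ?thesis by (rule that)
qed

text \<open>Colour the vertices outside P in decreasing order of rank: when v is coloured, its
  neighbours outside P that are already coloured are those of rank at least rank v.\<close>

lemma greedy_colouring:
  fixes A :: "'a \<Rightarrow> 'a \<Rightarrow> bool" and rank :: "'a \<Rightarrow> nat"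
  assumes "finite V" "P \<subseteq> V" "\<And>v. \<not> A v v" and c0: "proper_colouring A P C c0"
    and few: "\<And>v. v \<in> V - P \<Longrightarrow>
      card (c0 ` ({u \<in> V. A v u \<or> A u v} \<inter> P))
      + card ({u \<in> V. A v u \<or> A u v} - P - {u. rank u < rank v}) < C"
  shows "colourable V A C"
proof -
  have "finite (V - P)" using assms(1) by simp
  then have "\<exists>col. proper_colouring A (P \<union> (V - P)) C col \<and> (\<forall>x\<in>P. col x = c0 x)"
  proof (induction rule: finite_remove_induct)
    case empty
    then show ?case using c0 by auto
  next
    case (remove S)
    obtain a where a: "a \<in> S" and a_min: "\<And>u. u \<in> S \<Longrightarrow> rank a \<le> rank u"
      using ex_has_least_nat[of "\<lambda>x. x \<in> S" _ rank] remove.hyps(2) by blast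
    obtain col where col: "proper_colouring A (P \<union> (S - {a})) C col" "\<forall>x\<in>P. col x = c0 x"
      using remove.IH[OF a] by blast
    let ?N = "{u \<in> V. A a u \<or> A u a}"
    let ?later = "?N - P - {u. rank u < rank a}"
    have fin: "finite ?N" using assms(1) by simp
    have "{u \<in> P \<union> (S - {a}). A a u \<or> A u a} \<subseteq> (?N \<inter> P) \<union> ?later"
      using remove.hyps(3) assms(2) by (auto dest: a_min)
    then have "card (col ` {u \<in> P \<union> (S - {a}). A a u \<or> A u a})
        \<le> card (col ` (?N \<inter> P) \<union> col ` ?later)"
      using fin by (intro card_mono) auto
    also have "\<dots> \<le> card (col ` (?N \<inter> P)) + card (col ` ?later)"
      by (rule card_Un_le)
    also have "card (col ` ?later) \<le> card ?later"
      using fin by (intro card_image_le) simp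
    also have "col ` (?N \<inter> P) = c0 ` (?N \<inter> P)"
      using col(2) by simp
    also have "card (c0 ` (?N \<inter> P)) + card ?later < C"
      using few[of a] a remove.hyps(3) by blast
    finally have "card (col ` {u \<in> P \<union> (S - {a}). A a u \<or> A u a}) < C"
      by simp
    moreover have "finite (P \<union> (S - {a}))"
      using assms(1,2) remove.hyps(1) finite_subset by blast
    ultimately obtain c where "proper_colouring A (insert a (P \<union> (S - {a}))) C (col(a := c))"
      using proper_colouring_insert[OF col(1) assms(3)] by blast
    moreover have "insert a (P \<union> (S - {a})) = P \<union> S" using a by blast
    moreover have "a \<notin> P" using a remove.hyps(3) by blast
    ultimately show ?case using col(2) by auto
  qed
  moreover have "P \<union> (V - P) = V" using assms(2) by blast
  ultimately show ?thesis by (auto simp: colourable_iff_proper_colouring)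
qed

section \<open>Geodesic paths\<close>

locale geodesic = finite_graph +
  fixes P :: "'a list" and L :: nat
  assumes length_P: "length P = Suc L" and walk_P: "successively E P" and set_P: "set P \<subseteq> V"
    and shortest: "\<And>a b n. a \<le> L \<Longrightarrow> b \<le> L \<Longrightarrow> dist_le V E n (P ! a) (P ! b) \<Longrightarrow> a - b \<le> n"
begin

lemma nth_P_in_set: "a \<le> L \<Longrightarrow> P ! a \<in> set P"
  using length_P by simp

lemma nth_P_in_V: "a \<le> L \<Longrightarrow> P ! a \<in> V"
  using nth_P_in_set set_P by blast

lemma in_set_P_E:
  assumes "x \<in> set P"
  obtains r where "r \<le> L" "x = P ! r"
  using assms length_P by (metis in_set_conv_nth less_Suc_eq_le)

lemma edge_nth_P: "a < L \<Longrightarrow> E (P ! a) (P ! Suc a)"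
  using successively_nth[OF walk_P] length_P by simp

lemma dist_le_nth_P: "a \<le> b \<Longrightarrow> b \<le> L \<Longrightarrow> dist_le V E (b - a) (P ! a) (P ! b)"
  using dist_le_along_walk[OF walk_P set_P, of a "b - a"] length_P by simp

lemma dist_nth_P_ge: "a \<le> L \<Longrightarrow> b \<le> L \<Longrightarrow> dist_le V E n (P ! a) (P ! b) \<Longrightarrow> b - a \<le> n"
  using shortest dist_le_sym by blast

lemma nth_P_inj: "a \<le> L \<Longrightarrow> b \<le> L \<Longrightarrow> P ! a = P ! b \<Longrightarrow> a = b"
  using shortest[of a b 0] shortest[of b a 0] dist_le_refl nth_P_in_V by fastforce

lemma neighbour_on_P:
  assumes "s \<le> L" "y \<in> set P" "E (P ! s) y"
  shows "y = P ! (s - 1) \<or> y = P ! Suc s"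
proof -
  obtain r where r: "r \<le> L" "y = P ! r" using in_set_P_E[OF assms(2)] .
  have "dist_le V E 1 (P ! s) (P ! r)" using assms(3) r(2) dist_le_edge by simp
  then have "s - r \<le> 1" "r - s \<le> 1" using shortest dist_nth_P_ge assms(1) r(1) by blast+
  moreover have "r \<noteq> s" using assms(3) r(2) no_loop by auto
  ultimately have "r = s - 1 \<or> r = Suc s" by auto
  then show ?thesis using r(2) by auto
qed

lemma off_path_neighbour:
  assumes "1 \<le> s" "s < L" "degree V E (P ! s) \<ge> 3"
  obtains w where "E (P ! s) w" "w \<notin> set P"
proof -
  have "\<not> neighbours (P ! s) \<subseteq> {P ! (s - 1), P ! Suc s}"
  proof
    assume "neighbours (P ! s) \<subseteq> {P ! (s - 1), P ! Suc s}"
    then have "card (neighbours (P ! s)) \<le> card {P ! (s - 1), P ! Suc s}"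
      by (intro card_mono) auto
    also have "\<dots> \<le> 2" by (simp add: card_insert_if)
    finally show False using assms(3) by (simp add: degree_eq_card_neighbours)
  qed
  then obtain w where w: "E (P ! s) w" "w \<noteq> P ! (s - 1)" "w \<noteq> P ! Suc s"
    by (auto simp: neighbours_def)
  moreover have "w \<notin> set P" using w neighbour_on_P[of s w] assms(2) by auto
  ultimately show ?thesis using that by blast
qed

lemma geodesic_rev: "geodesic V E (rev P) L"
proof
  show "length (rev P) = Suc L" using length_P by simp
  show "successively E (rev P)"
    using walk_P by (simp add: edge_sym successively_mono)
  show "set (rev P) \<subseteq> V" using set_P by simp
  fix a b n assume ab: "a \<le> L" "b \<le> L" "dist_le V E n (rev P ! a) (rev P ! b)"
  then have "dist_le V E n (P ! (L - a)) (P ! (L - b))"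
    using length_P by (simp add: rev_nth)
  then have "(L - b) - (L - a) \<le> n" using dist_nth_P_ge[of "L - a" "L - b"] by simp
  then show "a - b \<le> n" using ab by simp
qed

lemma nb_walk_along_path:
  assumes U: "U \<in> nb_walks V E v d" "e \<le> d" "1 \<le> e" "\<forall>s<e. U ! s \<notin> set P" "U ! e = P ! i"
    and "i + t \<le> L"
  obtains W' where "W' \<in> nb_walks V E v (e + t)" "last W' = P ! (i + t)"
    "t \<ge> 1 \<Longrightarrow> W' ! (e + t - 1) = P ! (i + t - 1)"
proof -
  let ?W = "take (Suc e) U"
  have W: "?W \<in> nb_walks V E v e" "last ?W = P ! i" "?W ! (e - 1) \<notin> set P"
    using nb_walks_take[OF U(1,2)] U(3-5) by auto
  have "\<exists>W'. W' \<in> nb_walks V E v (e + t) \<and> last W' = P ! (i + t)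
      \<and> W' ! (e + t - 1) = (if t = 0 then ?W ! (e - 1) else P ! (i + t - 1))"
    using \<open>i + t \<le> L\<close>
  proof (induction t)
    case 0
    then show ?case using W by auto
  next
    case (Suc t)
    then obtain W' where W': "W' \<in> nb_walks V E v (e + t)" "last W' = P ! (i + t)"
      "W' ! (e + t - 1) = (if t = 0 then ?W ! (e - 1) else P ! (i + t - 1))"
      by auto
    let ?y = "P ! (i + Suc t)"
    have "E (last W') ?y" using W'(2) edge_nth_P Suc.prems by simp
    moreover have "?y \<noteq> W' ! (e + t - 1)"
    proof (cases "t = 0")
      case True
      then show ?thesis using W'(3) W(3) nth_P_in_set[of "i + Suc t"] Suc.prems by auto
    next
      case False
      have "i + t - 1 \<le> L" "i + Suc t \<noteq> i + t - 1" using Suc.prems by auto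
      then have "?y \<noteq> P ! (i + t - 1)" using nth_P_inj[of "i + Suc t" "i + t - 1"] Suc.prems by auto
      then show ?thesis using W'(3) False by simp
    qed
    ultimately have "W' @ [?y] \<in> nb_walks V E v (Suc (e + t))"
      using nb_walks_snoc[OF W'(1)] by blast
    moreover have "(W' @ [?y]) ! (e + Suc t - 1) = P ! (i + t)"
      using W'(2) nb_walks_last[OF W'(1)] nb_walks_length[OF W'(1)] by (simp add: nth_append)
    ultimately show ?case by (intro exI[of _ "W' @ [?y]"]) simp
  qed
  then show ?thesis using that by auto
qed

end

context bounded_connected_graph
begin

text \<open>By Moore's bound, a graph with more than 1 + f(L, D) vertices has a vertex u at distance
  more than L from a vertex r; the first L steps of a shortest path from r to u are a geodesic.\<close>

lemma long_geodesic_exists: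
  assumes "D \<ge> 2" "L \<ge> 1" "Suc (f_tree L D) < card V"
  obtains P where "geodesic V E P L"
proof -
  have "V \<noteq> {}" using connected by (simp add: connected_graph_def)
  then obtain r where r: "r \<in> V" by blast
  let ?B = "{u \<in> V. u \<noteq> r \<and> dist_le V E L r u}"
  have "\<not> V \<subseteq> insert r ?B"
  proof
    assume "V \<subseteq> insert r ?B"
    moreover have "finite ?B" using finite_V by simp
    ultimately have "card V \<le> card (insert r ?B)" by (intro card_mono) simp_all
    also have "\<dots> \<le> Suc (card ?B)" using \<open>finite ?B\<close> by (simp add: card_insert_if)
    finally show False using card_punctured_ball_le[OF r assms(1,2)] assms(3) by simp
  qed
  then obtain u where u: "u \<in> V" "\<not> dist_le V E L r u" by blast
  let ?m = "dist_to {u} r"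
  obtain xs where xs: "xs \<in> nb_walks V E r ?m" "\<forall>s\<le>?m. dist_to {u} (xs ! s) = ?m - s"
    using descending_nb_walk[of "{u}" r] u(1) r by blast
  have "dist_le V E ?m r u" using dist_to_attained[of "{u}" r] u(1) r by simp
  then have "L < ?m" using u(2) dist_le_mono by (meson not_le less_imp_le_nat)
  have "geodesic V E (take (Suc L) xs) L"
  proof
    show "length (take (Suc L) xs) = Suc L" using nb_walks_length[OF xs(1)] \<open>L < ?m\<close> by simp
    show "successively E (take (Suc L) xs)" using xs(1) by (simp add: nb_walks_def successively_take)
    show "set (take (Suc L) xs) \<subseteq> V" using xs(1) by (auto simp: nb_walks_def dest: in_set_takeD)
    fix a b n assume ab: "a \<le> L" "b \<le> L" "dist_le V E n (take (Suc L) xs ! a) (take (Suc L) xs ! b)"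
    then have "dist_to {u} (xs ! b) \<le> n + dist_to {u} (xs ! a)"
      using dist_to_le_add[of "{u}"] dist_le_sym u(1) by simp
    moreover have "dist_to {u} (xs ! a) = ?m - a" "dist_to {u} (xs ! b) = ?m - b"
      using xs(2) ab(1,2) \<open>L < ?m\<close> by simp_all
    ultimately show "a - b \<le> n" using ab(1,2) \<open>L < ?m\<close> by linarith
  qed
  then show ?thesis by (rule that)
qed

end

section \<open>Colouring the k-th power\<close>

locale long_geodesic = bounded_connected_graph + geodesic +
  fixes k :: nat
  assumes k_ge_1: "k \<ge> 1" and L_eq: "L = 4 * k" and D_ge_3: "D \<ge> 3"
begin

definition core :: "'a set" where
  "core = {P ! r | r. k - 1 \<le> r \<and> r \<le> L - (k - 1)}"

lemma core_subset_set_P: "core \<subseteq> set P"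
  unfolding core_def using nth_P_in_set by auto

lemma core_subset_V: "core \<subseteq> V"
  using core_subset_set_P set_P by blast

lemma core_nonempty: "core \<noteq> {}"
  unfolding core_def using L_eq by auto

lemma dist_to_core_nth_P_le:
  assumes "s \<le> L - (k - 1)"
  shows "dist_to core (P ! s) \<le> k - 1 - s"
proof (cases "k - 1 \<le> s")
  case True
  then have "P ! s \<in> core" using assms unfolding core_def by auto
  moreover have "P ! s \<in> V" using nth_P_in_V assms by simp
  ultimately have "dist_to core (P ! s) = 0"
    using dist_to_eq_0_iff[OF core_subset_V core_nonempty] by blast
  then show ?thesis by simp
next
  case False
  have "k - 1 \<le> L - (k - 1)" using L_eq by simp
  then have "P ! (k - 1) \<in> core" unfolding core_def by auto
  moreover have "dist_le V E (k - 1 - s) (P ! s) (P ! (k - 1))"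
    using dist_le_nth_P[of s "k - 1"] False L_eq by simp
  ultimately show ?thesis by (rule dist_to_le)
qed

lemma dist_to_core_nth_P_ge:
  assumes "i \<le> L"
  shows "k - 1 - i \<le> dist_to core (P ! i)"
proof -
  obtain z where z: "z \<in> core" "dist_le V E (dist_to core (P ! i)) (P ! i) z"
    using dist_to_attained[OF core_subset_V core_nonempty nth_P_in_V[OF assms]] by blast
  then obtain r where r: "z = P ! r" "k - 1 \<le> r" "r \<le> L - (k - 1)"
    unfolding core_def by auto
  have "r - i \<le> dist_to core (P ! i)"
    using dist_nth_P_ge[of i r] z(2) r(1,3) assms by simp
  then show ?thesis using r(2) by simp
qed

lemma long_geodesic_rev: "long_geodesic V E D (rev P) L k"
proof -
  interpret R: geodesic V E "rev P" L by (rule geodesic_rev)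
  show ?thesis by unfold_locales (use k_ge_1 L_eq D_ge_3 in simp_all)
qed

lemma core_rev: "long_geodesic.core (rev P) L k = core"
proof -
  have mirror: "rev P ! r = P ! (L - r) \<and> k - 1 \<le> L - r \<and> L - r \<le> L - (k - 1)"
    if "k - 1 \<le> r" "r \<le> L - (k - 1)" for r
  proof -
    have "r \<le> L" using that by simp
    then have "rev P ! r = P ! (L - r)" using length_P by (simp add: rev_nth)
    moreover have "k - 1 \<le> L - r" "L - r \<le> L - (k - 1)" using that L_eq k_ge_1 by linarith+
    ultimately show ?thesis by simp
  qed
  show ?thesis
    unfolding long_geodesic.core_def[OF long_geodesic_rev] core_def
  proof (intro set_eqI iffI)
    fix x assume "x \<in> {rev P ! r | r. k - 1 \<le> r \<and> r \<le> L - (k - 1)}"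
    then obtain r where "x = rev P ! r" "k - 1 \<le> r" "r \<le> L - (k - 1)" by blast
    then show "x \<in> {P ! r | r. k - 1 \<le> r \<and> r \<le> L - (k - 1)}" using mirror by blast
  next
    fix x assume "x \<in> {P ! r | r. k - 1 \<le> r \<and> r \<le> L - (k - 1)}"
    then obtain r where r: "x = P ! r" "k - 1 \<le> r" "r \<le> L - (k - 1)" by blast
    then have "x = rev P ! (L - r)" using mirror[of "L - r"] L_eq by simp
    moreover have "k - 1 \<le> L - r" "L - r \<le> L - (k - 1)" using r L_eq by auto
    ultimately show "x \<in> {rev P ! r | r. k - 1 \<le> r \<and> r \<le> L - (k - 1)}" by blast
  qed
qed

text \<open>Vertices nearer to the core than v are coloured after v. A family of k - 2 walks as below
  shows that at most f(k, D) - (k - 2) vertices of the k-ball of v are coloured before v: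
  every walk either ends at a vertex coloured later or witnesses a vertex of degree below D.\<close>

definition nearer_core :: "'a \<Rightarrow> 'a set" where
  "nearer_core v = {u \<in> V. u \<notin> set P \<and> dist_to core u < dist_to core v}"

definition saving_walks :: "'a \<Rightarrow> 'a list set \<Rightarrow> bool" where
  "saving_walks v F \<longleftrightarrow> F \<subseteq> (\<Union>j\<in>{1..k}. nb_walks V E v j) \<and> card F = k - 2 \<and>
     (\<forall>xs\<in>F. last xs \<in> nearer_core v \<or> length xs \<le> k \<and> degree V E (last xs) < D)"

lemma saving_walks_rev: "long_geodesic.saving_walks V E D (rev P) L k v F = saving_walks v F"
proof -
  interpret R: long_geodesic V E D "rev P" L k by (rule long_geodesic_rev)
  show ?thesis
    unfolding R.saving_walks_def saving_walks_def R.nearer_core_def nearer_core_def core_rev by simp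
qed

lemma saving_walks_of_family:
  assumes "\<And>j. j \<in> {1..k - 2} \<Longrightarrow> X j \<noteq> {}"
    and "\<And>j j'. j \<in> {1..k - 2} \<Longrightarrow> j' \<in> {1..k - 2} \<Longrightarrow> j \<noteq> j' \<Longrightarrow> X j \<inter> X j' = {}"
    and walks: "\<And>j. j \<in> {1..k - 2} \<Longrightarrow> X j \<subseteq> (\<Union>n\<in>{1..k}. nb_walks V E v n)"
    and ends: "\<And>j xs. j \<in> {1..k - 2} \<Longrightarrow> xs \<in> X j \<Longrightarrow>
      last xs \<in> nearer_core v \<or> length xs \<le> k \<and> degree V E (last xs) < D"
  obtains F where "saving_walks v F"
proof -
  obtain F where F: "F \<subseteq> (\<Union>j\<in>{1..k - 2}. X j)" "card F = card {1..k - 2}"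
    using transversal_exists[of "{1..k - 2}" X] assms(1,2) by blast
  have "F \<subseteq> (\<Union>n\<in>{1..k}. nb_walks V E v n)" using F(1) walks by blast
  moreover have "\<forall>xs\<in>F. last xs \<in> nearer_core v \<or> length xs \<le> k \<and> degree V E (last xs) < D"
    using F(1) ends by blast
  ultimately have "saving_walks v F" using F(2) by (simp add: saving_walks_def)
  then show ?thesis by (rule that)
qed

lemma saving_walks_off_path:
  assumes U: "U \<in> nb_walks V E v d" "\<forall>s\<le>d. dist_to core (U ! s) = d - s"
    and e: "k - 1 \<le> e" "e \<le> d" "\<forall>s<e. U ! s \<notin> set P"
  obtains F where "saving_walks v F"
proof (rule saving_walks_of_family[of "\<lambda>j. {take (Suc j) U}"])
  fix j assume j: "j \<in> {1..k - 2}"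
  have "dist_to core v = d" using U(2) nb_walks_nth_0[OF U(1)] by auto
  then show "last xs \<in> nearer_core v \<or> length xs \<le> k \<and> degree V E (last xs) < D"
    if "xs \<in> {take (Suc j) U}" for xs
    using that j e U nb_walks_take[OF U(1), of j] nb_walks_nth_in_V[OF U(1), of j]
    by (auto simp: nearer_core_def)
  have "j \<in> {1..k}" "j \<le> d" using j e by auto
  then show "{take (Suc j) U} \<subseteq> (\<Union>n\<in>{1..k}. nb_walks V E v n)"
    using nb_walks_take[OF U(1), of j] by blast
  show "{take (Suc j) U} \<noteq> {}" by simp
  show "{take (Suc j) U} \<inter> {take (Suc j') U} = {}" if "j' \<in> {1..k - 2}" "j \<noteq> j'" for j'
  proof -
    have "length (take (Suc j) U) \<noteq> length (take (Suc j') U)"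
      using j that e nb_walks_length[OF U(1)] by auto
    then have "take (Suc j) U \<noteq> take (Suc j') U" by metis
    then show ?thesis by simp
  qed
qed

lemma nb_walk_via_path:
  assumes U: "U \<in> nb_walks V E v d" "\<forall>s\<le>d. dist_to core (U ! s) = d - s" "d \<ge> 2"
    and e: "1 \<le> e" "e \<le> d" "\<forall>s<e. U ! s \<notin> set P" "U ! e = P ! i" "i \<le> 2 * k"
    and t: "1 \<le> t" "e + t \<le> k - 1"
  obtains (stop) W where "W \<in> nb_walks V E v (e + t)" "last W = P ! (i + t)"
      "degree V E (P ! (i + t)) < D"
    | (leave) W where "W \<in> nb_walks V E v (e + t + 1)" "last W \<in> nearer_core v"
      "\<not> degree V E (P ! (i + t)) < D"
proof -
  have "i + t < L" "i + t \<le> L - (k - 1)" using t e(5) L_eq by auto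
  obtain W where W: "W \<in> nb_walks V E v (e + t)" "last W = P ! (i + t)"
    "W ! (e + t - 1) = P ! (i + t - 1)"
    using nb_walk_along_path[OF U(1) e(2,1,3,4), of t] t \<open>i + t < L\<close> by auto
  show ?thesis
  proof (cases "degree V E (P ! (i + t)) < D")
    case True
    then show ?thesis using stop W by blast
  next
    case False
    obtain w where w: "E (P ! (i + t)) w" "w \<notin> set P"
      using off_path_neighbour[of "i + t"] t(1) False \<open>i + t < L\<close> D_ge_3 by auto
    have "W ! (e + t - 1) \<in> set P" using W(3) nth_P_in_set \<open>i + t < L\<close> by simp
    then have "W @ [w] \<in> nb_walks V E v (e + t + 1)"
      using nb_walks_snoc[OF W(1)] W(2) w by auto
    have "dist_to core w \<le> 1 + dist_to core (P ! (i + t))"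
      using dist_to_le_add[OF core_subset_V core_nonempty dist_le_edge[OF edge_sym[OF w(1)]]] .
    also have "dist_to core (P ! (i + t)) \<le> k - 1 - (i + t)"
      using dist_to_core_nth_P_le \<open>i + t \<le> L - (k - 1)\<close> .
    also have "k - 1 - i \<le> d - e"
      using dist_to_core_nth_P_ge[of i] U(2)[rule_format, OF e(2)] e(4,5) L_eq by simp
    then have "1 + (k - 1 - (i + t)) < d" using t(1) e(1) U(3) by linarith
    finally have "w \<in> nearer_core v"
      using w edge_in_V U(2) nb_walks_nth_0[OF U(1)] by (auto simp: nearer_core_def)
    then show ?thesis using leave[of "W @ [w]"] \<open>W @ [w] \<in> nb_walks V E v (e + t + 1)\<close> False by simp
  qed
qed

text \<open>The descending walk U from v meets P early, at P ! i with i in the first half of P. The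
  j-th walk either is a prefix of U ending before P, or follows U up to P ! i and then P up to
  P ! (i + t): it stops there if that vertex has degree below D, and otherwise leaves P
  through a third neighbour, which is nearer to the core than v.\<close>

lemma saving_walks_along_path:
  assumes U: "U \<in> nb_walks V E v d" "\<forall>s\<le>d. dist_to core (U ! s) = d - s" "d \<ge> 2"
    and e: "1 \<le> e" "e \<le> d" "\<forall>s<e. U ! s \<notin> set P" "e \<le> k - 2" "U ! e = P ! i" "i \<le> 2 * k"
  obtains F where "saving_walks v F"
proof -
  define stops where "stops j \<longleftrightarrow> \<not> j < e \<and> degree V E (P ! (i + (j - e + 1))) < D" for j
  define len where "len j = (if j < e then j else if stops j then j + 1 else j + 2)" for j
  define X where "X j = (if stops j then {xs \<in> nb_walks V E v (len j). last xs = P ! (i + (j - e + 1))}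
      else {xs \<in> nb_walks V E v (len j). last xs \<in> nearer_core v})" for j
  have X_len: "xs \<in> nb_walks V E v (len j)" and X_on_P: "last xs \<in> set P \<longleftrightarrow> stops j"
    if "xs \<in> X j" "j \<in> {1..k - 2}" for xs j
  proof -
    have "i + (j - e + 1) \<le> L" using that(2) e(6) L_eq by auto
    then show "xs \<in> nb_walks V E v (len j)" "last xs \<in> set P \<longleftrightarrow> stops j"
      using that(1) nth_P_in_set unfolding X_def nearer_core_def by (auto split: if_splits)
  qed
  show ?thesis
  proof (rule saving_walks_of_family)
    fix j assume j: "j \<in> {1..k - 2}"
    show "X j \<noteq> {}"
    proof (cases "j < e")
      case True
      have "take (Suc j) U \<in> X j"
        using True j e U nb_walks_take[OF U(1), of j] nb_walks_nth_in_V[OF U(1), of j]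
          nb_walks_nth_0[OF U(1)]
        unfolding X_def stops_def len_def nearer_core_def by auto
      then show ?thesis by blast
    next
      case False
      define t where "t = j - e + 1"
      have t: "1 \<le> t" "e + t \<le> k - 1" "e + t = j + 1" using False j unfolding t_def by auto
      consider (stop) W where "W \<in> nb_walks V E v (e + t)" "last W = P ! (i + t)"
          "degree V E (P ! (i + t)) < D"
        | (leave) W where "W \<in> nb_walks V E v (e + t + 1)" "last W \<in> nearer_core v"
          "\<not> degree V E (P ! (i + t)) < D"
        using nb_walk_via_path[OF U e(1,2,3,5,6) t(1,2)] by metis
      then show ?thesis
      proof cases
        case (stop W)
        then have "W \<in> X j" using False t unfolding X_def stops_def len_def t_def by simp
        then show ?thesis by blast
      next
        case (leave W)
        then have "W \<in> X j" using False t unfolding X_def stops_def len_def t_def by simp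
        then show ?thesis by blast
      qed
    qed
    show "X j \<subseteq> (\<Union>n\<in>{1..k}. nb_walks V E v n)"
    proof
      fix xs assume "xs \<in> X j"
      moreover have "len j \<in> {1..k}" using j e(4) unfolding len_def by auto
      ultimately show "xs \<in> (\<Union>n\<in>{1..k}. nb_walks V E v n)" using X_len[OF _ j] by blast
    qed
    show "last xs \<in> nearer_core v \<or> length xs \<le> k \<and> degree V E (last xs) < D" if "xs \<in> X j" for xs
    proof (cases "stops j")
      case True
      have "length xs \<le> k"
        using nb_walks_length[OF X_len[OF that j]] True j unfolding len_def stops_def by auto
      then show ?thesis using that True unfolding X_def stops_def by auto
    next
      case False
      then show ?thesis using that unfolding X_def by simp
    qed
    show "X j \<inter> X j' = {}" if "j' \<in> {1..k - 2}" "j \<noteq> j'" for j'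
    proof (rule ccontr)
      assume "X j \<inter> X j' \<noteq> {}"
      then obtain xs where xs: "xs \<in> X j" "xs \<in> X j'" by blast
      have "len j = len j'"
        using nb_walks_length[OF X_len[OF xs(1) j]] nb_walks_length[OF X_len[OF xs(2) that(1)]] by simp
      moreover have "stops j = stops j'" using X_on_P[OF xs(1) j] X_on_P[OF xs(2) that(1)] by simp
      ultimately show False using that(2) unfolding len_def stops_def by (auto split: if_splits)
    qed
  qed (fact that)
qed

lemma saving_walks_exist:
  assumes v: "v \<in> V" "v \<notin> set P" and d: "dist_to core v \<ge> 2"
  obtains F where "saving_walks v F"
proof -
  let ?d = "dist_to core v"
  obtain U where U: "U \<in> nb_walks V E v ?d" "\<forall>s\<le>?d. dist_to core (U ! s) = ?d - s"
    using descending_nb_walk[OF core_subset_V core_nonempty v(1)] by blast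
  have "dist_to core (U ! ?d) = 0" using U(2) by simp
  then have "U ! ?d \<in> core"
    using nb_walks_nth_in_V[OF U(1), of ?d] dist_to_eq_0_iff[OF core_subset_V core_nonempty] by simp
  then have "U ! ?d \<in> set P" using core_subset_set_P by blast
  define e where "e = (LEAST s. U ! s \<in> set P)"
  have e_P: "U ! e \<in> set P" unfolding e_def by (rule LeastI) fact
  have e_le: "e \<le> ?d" unfolding e_def by (rule Least_le) fact
  have before_e: "\<forall>s<e. U ! s \<notin> set P" unfolding e_def using not_less_Least by blast
  have e_ge_1: "1 \<le> e" using e_P nb_walks_nth_0[OF U(1)] v(2) by (cases e) auto
  obtain i where i: "i \<le> L" "U ! e = P ! i" using in_set_P_E[OF e_P] by blast
  consider "k - 1 \<le> e" | "e \<le> k - 2" "i \<le> 2 * k" | "e \<le> k - 2" "2 * k < i" by linarith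
  then show ?thesis
  proof cases
    case 1
    then show ?thesis using saving_walks_off_path[OF U 1 e_le before_e] that by blast
  next
    case 2
    then show ?thesis using saving_walks_along_path[OF U d e_ge_1 e_le before_e 2(1) i(2) 2(2)] that by blast
  next
    case 3
    \<comment> \<open>Reversing P keeps the core and moves P ! i into the first half.\<close>
    interpret R: long_geodesic V E D "rev P" L k by (rule long_geodesic_rev)
    have "U ! e = rev P ! (L - i)" using i length_P by (simp add: rev_nth)
    moreover have "L - i \<le> 2 * k" using 3(2) L_eq by simp
    moreover have "\<forall>s<e. U ! s \<notin> set (rev P)" using before_e by simp
    moreover have "\<forall>s\<le>?d. dist_to R.core (U ! s) = ?d - s" using U(2) by (simp add: core_rev)
    ultimately obtain F where "R.saving_walks v F"
      using R.saving_walks_along_path[OF U(1) _ d e_ge_1 e_le _ 3(1)] by blast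
    then show ?thesis using that saving_walks_rev by blast
  qed
qed

lemma card_ball_coloured_before_le:
  assumes "v \<in> V" "v \<notin> set P" "dist_to core v \<ge> 2"
  shows "card {u \<in> V. u \<noteq> v \<and> dist_le V E k v u \<and> u \<notin> nearer_core v} + (k - 2) \<le> f_tree k D"
proof -
  obtain F where "saving_walks v F" using saving_walks_exist[OF assms] .
  then show ?thesis
    using card_ball_plus_walks_le[OF assms(1) _ k_ge_1, of F "nearer_core v"] D_ge_3
    unfolding saving_walks_def by auto
qed

lemma adjacent_to_core:
  assumes "v \<in> V" "v \<notin> set P" "dist_to core v = 1"
  obtains j where "k - 1 \<le> j" "j \<le> L - (k - 1)" "E v (P ! j)"
proof -
  obtain z where z: "z \<in> core" "dist_le V E 1 v z"
    using dist_to_attained[OF core_subset_V core_nonempty assms(1)] assms(3) by auto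
  have "v \<noteq> z" using z(1) core_subset_set_P assms(2) by blast
  then have "E v z" using z(2) by (auto simp: dist_le_Suc_iff dist_le_0_iff)
  then show ?thesis using z(1) that unfolding core_def by blast
qed

lemma three_k_le_f_tree: "3 * k \<le> f_tree k D"
proof -
  have "k * 3 \<le> k * D" using D_ge_3 by simp
  then show ?thesis using mult_le_f_tree[of D k] D_ge_3 by linarith
qed

definition path_colour :: "'a \<Rightarrow> nat" where
  "path_colour x = (LEAST r. r \<le> L \<and> P ! r = x) mod Suc k"

lemma path_colour_nth: "r \<le> L \<Longrightarrow> path_colour (P ! r) = r mod Suc k"
  unfolding path_colour_def using nth_P_inj by (metis (mono_tags, lifting) Least_equality order_refl)

lemma proper_path_colouring:
  assumes "Suc k \<le> C"
  shows "proper_colouring (graph_power V E k) (set P) C path_colour"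
  unfolding proper_colouring_def
proof (intro conjI ballI impI)
  fix x assume "x \<in> set P"
  then obtain r where "r \<le> L" "x = P ! r" by (rule in_set_P_E)
  then have "path_colour x < Suc k" using path_colour_nth by simp
  with assms show "path_colour x < C" by simp
next
  fix x y assume "x \<in> set P" "y \<in> set P" and xy: "graph_power V E k x y"
  then obtain a b where ab: "a \<le> L" "x = P ! a" "b \<le> L" "y = P ! b" by (metis in_set_P_E)
  have "a \<noteq> b" "dist_le V E k (P ! a) (P ! b)" using xy ab by (auto simp: graph_power_def)
  then have "a mod Suc k \<noteq> b mod Suc k"
    using shortest dist_nth_P_ge ab(1,3) by (intro mod_Suc_neq_if_close) blast+
  then show "path_colour x \<noteq> path_colour y" using ab path_colour_nth by simp
qed

lemma card_ball_inter_path_ge: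
  assumes "v \<in> V" "v \<notin> set P" "dist_to core v = 1"
  shows "2 * k - 1 \<le> card ({u \<in> V. u \<noteq> v \<and> dist_le V E k v u} \<inter> set P)"
proof -
  obtain j where j: "k - 1 \<le> j" "j \<le> L - (k - 1)" "E v (P ! j)"
    using adjacent_to_core[OF assms] .
  let ?R = "{j - (k - 1) .. j + (k - 1)}"
  have R_L: "r \<le> L" if "r \<in> ?R" for r using that j(2) L_eq by auto
  have "inj_on (nth P) ?R" by (rule inj_onI) (use R_L nth_P_inj in blast)
  then have "card (nth P ` ?R) = 2 * k - 1" using j(1) k_ge_1 by (simp add: card_image)
  moreover have "nth P ` ?R \<subseteq> {u \<in> V. u \<noteq> v \<and> dist_le V E k v u} \<inter> set P"
  proof
    fix x assume "x \<in> nth P ` ?R"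
    then obtain r where r: "r \<in> ?R" "x = P ! r" by blast
    have "dist_le V E (k - 1) (P ! j) (P ! r)"
    proof (cases "j \<le> r")
      case True
      then show ?thesis using dist_le_nth_P[of j r] R_L[OF r(1)] r(1) by (auto intro: dist_le_mono)
    next
      case False
      then have "dist_le V E (j - r) (P ! j) (P ! r)"
        using dist_le_nth_P[of r j] R_L[OF r(1)] j(2) dist_le_sym by auto
      moreover have "j - r \<le> k - 1" using r(1) by auto
      ultimately show ?thesis by (rule dist_le_mono)
    qed
    then have "dist_le V E (1 + (k - 1)) v (P ! r)" using dist_le_trans dist_le_edge[OF j(3)] by blast
    moreover have "P ! r \<noteq> v" "P ! r \<in> set P" using assms(2) nth_P_in_set R_L[OF r(1)] by auto
    ultimately show "x \<in> {u \<in> V. u \<noteq> v \<and> dist_le V E k v u} \<inter> set P"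
      using r(2) k_ge_1 set_P by auto
  qed
  moreover have "finite ({u \<in> V. u \<noteq> v \<and> dist_le V E k v u} \<inter> set P)" by simp
  ultimately show ?thesis by (metis card_mono)
qed

lemma colours_blocked_less:
  assumes "v \<in> V" "v \<notin> set P"
  defines "N \<equiv> {u \<in> V. u \<noteq> v \<and> dist_le V E k v u}"
  shows "card (path_colour ` (N \<inter> set P)) + card (N - set P - {u. dist_to core u < dist_to core v})
    < f_tree k D + 3 - k" (is "card _ + card ?later < _")
proof -
  have fin: "finite N" unfolding N_def using finite_V by simp
  have card_N: "card N \<le> f_tree k D"
    unfolding N_def using card_punctured_ball_le[OF assms(1) _ k_ge_1] D_ge_3 by simp
  have "dist_to core v \<noteq> 0"
    using assms(1,2) core_subset_set_P dist_to_eq_0_iff[OF core_subset_V core_nonempty] by blast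
  then consider "dist_to core v = 1" | "dist_to core v \<ge> 2" by linarith
  then show ?thesis
  proof cases
    case 1
    have "path_colour ` (N \<inter> set P) \<subseteq> {..<Suc k}" by (auto simp: path_colour_def)
    then have "card (path_colour ` (N \<inter> set P)) \<le> Suc k"
      using card_mono[OF finite_lessThan] by fastforce
    moreover have "card ?later + card (N \<inter> set P) = card (?later \<union> (N \<inter> set P))"
      using fin by (intro card_Un_disjoint[symmetric]) auto
    moreover have "card (?later \<union> (N \<inter> set P)) \<le> card N"
      using fin by (intro card_mono) auto
    moreover have "2 * k - 1 \<le> card (N \<inter> set P)"
      using card_ball_inter_path_ge[OF assms(1,2) 1] unfolding N_def .
    ultimately show ?thesis using card_N three_k_le_f_tree k_ge_1 by linarith
  next
    case 2
    have "card (path_colour ` (N \<inter> set P)) + card ?later \<le> card (N \<inter> set P) + card ?later"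
      using fin by (simp add: card_image_le)
    also have "\<dots> = card ((N \<inter> set P) \<union> ?later)"
      using fin by (intro card_Un_disjoint[symmetric]) auto
    also have "(N \<inter> set P) \<union> ?later = {u \<in> N. u \<notin> nearer_core v}"
      unfolding N_def nearer_core_def by auto
    also have "card {u \<in> N. u \<notin> nearer_core v} \<le> f_tree k D - (k - 2)"
      using card_ball_coloured_before_le[OF assms(1,2) 2] unfolding N_def by simp
    also have "\<dots> < f_tree k D + 3 - k"
      using three_k_le_f_tree by simp
    finally show ?thesis .
  qed
qed

theorem colourable_power:
  "colourable V (graph_power V E k) (f_tree k D + 3 - k)"
proof (rule greedy_colouring[where rank = "dist_to core"])
  show "finite V" "set P \<subseteq> V" by (fact finite_V, fact set_P)
  show "\<not> graph_power V E k v v" for v by (simp add: graph_power_def)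
  have "Suc k \<le> f_tree k D + 3 - k"
    using three_k_le_f_tree by simp
  then show "proper_colouring (graph_power V E k) (set P) (f_tree k D + 3 - k) path_colour"
    by (rule proper_path_colouring)
  fix v assume "v \<in> V - set P"
  moreover have "{u \<in> V. graph_power V E k v u \<or> graph_power V E k u v}
      = {u \<in> V. u \<noteq> v \<and> dist_le V E k v u}"
    unfolding graph_power_def using dist_le_sym by blast
  ultimately show "card (path_colour ` ({u \<in> V. graph_power V E k v u \<or> graph_power V E k u v} \<inter> set P))
      + card ({u \<in> V. graph_power V E k v u \<or> graph_power V E k u v} - set P
          - {u. dist_to core u < dist_to core v}) < f_tree k D + 3 - k"
    using colours_blocked_less by simp
qed

end

theorem theorem4:
  fixes k D :: nat
  assumes "k \<ge> 1" and "D \<ge> 3"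
  shows "\<exists>N :: nat. \<forall>(V :: nat set) E.
           simple_graph V E \<and> connected_graph V E \<and> max_degree V E = D
           \<and> k_gap k V E < int k - 2 \<longrightarrow> card V \<le> N"
proof (intro exI[of _ "Suc (f_tree (4 * k) D)"] allI impI)
  fix V :: "nat set" and E
  assume "simple_graph V E \<and> connected_graph V E \<and> max_degree V E = D \<and> k_gap k V E < int k - 2"
  then have G: "simple_graph V E" "connected_graph V E" and max_deg: "max_degree V E = D"
    and gap: "k_gap k V E < int k - 2" by auto
  interpret bounded_connected_graph V E D
    using G max_deg by unfold_locales (auto simp: max_degree_def simple_graph_def)
  show "card V \<le> Suc (f_tree (4 * k) D)"
  proof (rule ccontr)
    assume "\<not> card V \<le> Suc (f_tree (4 * k) D)"
    then obtain P where "geodesic V E P (4 * k)"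
      using long_geodesic_exists[of "4 * k"] assms by auto
    then interpret geodesic V E P "4 * k" .
    interpret long_geodesic V E D P "4 * k" k
      by unfold_locales (use assms in simp_all)
    have "chromatic_number V (graph_power V E k) \<le> f_tree k D + 3 - k"
      unfolding chromatic_number_def by (rule Least_le) (rule colourable_power)
    then have "int k - 2 \<le> k_gap k V E"
      using three_k_le_f_tree unfolding k_gap_def max_deg by linarith
    with gap show False by simp
  qed
qed

end
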